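(* Let $p,q\in\mathbb{C}$ with $pq\neq 1$. The following two conditions are equivalent: (i) $\mathcal{S}_{p,q}$ maps every positive triangle triple to a positive triangle triple; (ii) either $p=q\neq \tfrac12$, or $p\neq q$ and $\frac{(p-1)(2q-1)}{p-q}\in\mathbb{R}\cup\mathcal{H}^+$, where $\mathcal{H}^+=\{z\in\mathbb{C}:\operatorname{Im}z>0\}$.
   Context: A triangle triple is an ordered triple $(a,b,c)\in\mathbb{C}^3$ with pairwise distinct entries; it is degenerate if $a,b,c$ are collinear, and positive if it is non-degenerate and $\operatorname{Im}\frac{a-b}{c-b}>0$. For $p,q\in\mathbb{C}$ with $pq\neq1$ put $\alpha_{p,q}=\frac{p(1-q)}{1-pq}$, $\beta_{p,q}=\frac{q(1-p)}{1-pq}$, $\gamma_{p,q}=\frac{(1-p)(1-q)}{1-pq}$, and define the linear map $\mathcal{S}_{p,q}:\mathbb{C}^3\to\mathbb{C}^3$ by $\mathcal{S}_{p,q}(a,b,c)=(\alpha_{p,q}a+\beta_{p,q}b+\gamma_{p,q}c,\ \alpha_{p,q}b+\beta_{p,q}c+\gamma_{p,q}a,\ \alpha_{p,q}c+\beta_{p,q}a+\gamma_{p,q}b)$. *)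

theory Defs
  imports "HOL-Analysis.Analysis"
begin

definition triangle_triple :: "complex \<times> complex \<times> complex \<Rightarrow> bool" where
  "triangle_triple t = (case t of (a, b, c) \<Rightarrow> a \<noteq> b \<and> b \<noteq> c \<and> a \<noteq> c)"

definition degenerate :: "complex \<times> complex \<times> complex \<Rightarrow> bool" where
  "degenerate t = (case t of (a, b, c) \<Rightarrow> collinear {a, b, c})"

definition positive_triple :: "complex \<times> complex \<times> complex \<Rightarrow> bool" where
  "positive_triple t = (triangle_triple t \<and> \<not> degenerate t \<and>
     (case t of (a, b, c) \<Rightarrow> Im ((a - b) / (c - b)) > 0))"

definition alpha :: "complex \<Rightarrow> complex \<Rightarrow> complex" where
  "alpha p q = p * (1 - q) / (1 - p * q)"
definition beta :: "complex \<Rightarrow> complex \<Rightarrow> complex" where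
  "beta p q = q * (1 - p) / (1 - p * q)"
definition gamma :: "complex \<Rightarrow> complex \<Rightarrow> complex" where
  "gamma p q = (1 - p) * (1 - q) / (1 - p * q)"

definition S_map :: "complex \<Rightarrow> complex \<Rightarrow> complex \<times> complex \<times> complex \<Rightarrow> complex \<times> complex \<times> complex" where
  "S_map p q t = (case t of (a, b, c) \<Rightarrow>
     (alpha p q * a + beta p q * b + gamma p q * c,
      alpha p q * b + beta p q * c + gamma p q * a,
      alpha p q * c + beta p q * a + gamma p q * b))"

definition upper_half_plane :: "complex set" where
  "upper_half_plane = {z. Im z > 0}"

end

theory Submission
  imports Defs
begin

text \<open>Write a triple as \<open>m (1,1,1) + u (1,\<omega>,\<omega>\<^sup>2) + v (1,\<omega>\<^sup>2,\<omega>)\<close> with \<open>\<omega>\<close> a primitive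
  cube root of unity. The triple is positive exactly when \<open>|v| < |u|\<close>, and since \<open>S\<^sub>p\<^sub>,\<^sub>q\<close> is a
  circulant map with \<open>\<alpha> + \<beta> + \<gamma> = 1\<close>, it fixes \<open>m\<close> and multiplies \<open>u\<close> and \<open>v\<close> by its
  eigenvalues \<open>\<lambda>\<^sub>1 = \<alpha> + \<beta>\<omega> + \<gamma>\<omega>\<^sup>2\<close> and \<open>\<lambda>\<^sub>2 = \<alpha> + \<beta>\<omega>\<^sup>2 + \<gamma>\<omega>\<close>. Hence positivity is
  preserved iff \<open>\<lambda>\<^sub>1 \<noteq> 0\<close> and \<open>|\<lambda>\<^sub>2| \<le> |\<lambda>\<^sub>1|\<close>. Up to the factor \<open>1 - pq\<close> the eigenvalues are
  \<open>A + \<omega>B\<close> and \<open>A + \<omega>\<^sup>2B\<close> with \<open>A = (2p-1)(1-q)\<close>, \<open>B = (2q-1)(1-p)\<close>, and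
  \<open>|A + \<omega>B|\<^sup>2 - |A + \<omega>\<^sup>2B|\<^sup>2 = 2\<surd>3 Im (A B\<^sup>*)\<close>; finally
  \<open>Im (A B\<^sup>*) = |p - q|\<^sup>2 Im ((p-1)(2q-1)/(p-q))\<close>.\<close>

definition omega :: complex where
  "omega = Complex (-1/2) (sqrt 3 / 2)"

lemma sqrt3_mult_self: "sqrt 3 * sqrt 3 = (3::real)"
  by simp

lemma cnj_omega: "cnj omega = -1 - omega"
  unfolding omega_def by (simp add: complex_eq_iff)

lemma omega_squared: "omega\<^sup>2 = -1 - omega"
  unfolding omega_def by (simp add: power2_eq_square complex_eq_iff sqrt3_mult_self)

lemma omega_neq_minus_one: "1 + omega \<noteq> 0"
  unfolding omega_def by (simp add: complex_eq_iff)

lemma norm_add_omega_diff: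
  "(cmod (A + omega * B))\<^sup>2 - (cmod (A + cnj omega * B))\<^sup>2 = 2 * sqrt 3 * Im (A * cnj B)"
  unfolding omega_def
  by (cases A; cases B; simp only: cmod_power2; simp add: power2_eq_square algebra_simps sqrt3_mult_self)

lemma norm_add_cnj_omega_le_iff:
  "cmod (A + cnj omega * B) \<le> cmod (A + omega * B) \<longleftrightarrow> 0 \<le> Im (A * cnj B)"
proof -
  have "cmod (A + cnj omega * B) \<le> cmod (A + omega * B) \<longleftrightarrow>
        (cmod (A + cnj omega * B))\<^sup>2 \<le> (cmod (A + omega * B))\<^sup>2"
    by (simp add: power_mono_iff)
  also have "\<dots> \<longleftrightarrow> 0 \<le> 2 * sqrt 3 * Im (A * cnj B)"
    using norm_add_omega_diff[of A B] by linarith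
  finally show ?thesis
    by (simp add: zero_le_mult_iff)
qed

lemma add_omega_mult_eq_0_imp_zero:
  assumes "A + omega * B = 0" and "0 \<le> Im (A * cnj B)"
  shows "B = 0"
proof -
  have "Im (A * cnj B) = - sqrt 3 / 2 * (cmod B)\<^sup>2"
    using assms(1) unfolding eq_neg_iff_add_eq_0[symmetric] omega_def
    by (cases B; simp only: cmod_power2; simp add: power2_eq_square algebra_simps)
  then show ?thesis
    using assms(2) by (simp add: mult_le_0_iff)
qed

lemma Im_divide_pos_iff: "0 < Im (x / y) \<longleftrightarrow> 0 < Im (x * cnj y)"
proof (cases "y = 0")
  case False
  have "x / y = x * cnj y / complex_of_real ((cmod y)\<^sup>2)"
    by (subst complex_div_cnj) simp
  then have "Im (x / y) = Im (x * cnj y) / (cmod y)\<^sup>2"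
    by simp
  then show ?thesis
    using False by (simp add: zero_less_divide_iff)
qed simp

lemma positive_triple_iff: "positive_triple (a, b, c) \<longleftrightarrow> 0 < Im ((a - b) * cnj (c - b))"
proof
  assume "0 < Im ((a - b) * cnj (c - b))" (is "0 < ?I")
  then have ab: "a \<noteq> b" and cb: "c \<noteq> b" and ac: "a \<noteq> c"
    by (auto simp: algebra_simps)
  have "\<not> collinear {a, b, c}"
  proof
    assume "collinear {a, b, c}"
    then have "collinear {0, a - b, c - b}"
      using collinear_3[of a b c] by simp
    then obtain r where r: "c - b = r *\<^sub>R (a - b)"
      using collinear_lemma[of "a - b" "c - b"] ab cb by auto
    have "?I = r * Im ((a - b) * cnj (a - b))"
      unfolding r by (simp add: scaleR_conv_of_real algebra_simps)
    with \<open>0 < ?I\<close> show False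
      by (simp add: algebra_simps)
  qed
  with ab cb ac \<open>0 < ?I\<close> show "positive_triple (a, b, c)"
    unfolding positive_triple_def triangle_triple_def degenerate_def
    by (simp add: Im_divide_pos_iff)
qed (simp add: positive_triple_def Im_divide_pos_iff)

definition fourier_triple :: "complex \<Rightarrow> complex \<Rightarrow> complex \<Rightarrow> complex \<times> complex \<times> complex" where
  "fourier_triple m u v = (m + u + v, m + u * omega + v * omega\<^sup>2, m + u * omega\<^sup>2 + v * omega)"

lemma fourier_triple_surj: "\<exists>m u v. t = fourier_triple m u v"
proof -
  obtain a b c where t: "t = (a, b, c)"
    by (cases t) auto
  have "t = fourier_triple ((a + b + c) / 3) ((a + b * omega\<^sup>2 + c * omega) / 3)
                           ((a + b * omega + c * omega\<^sup>2) / 3)"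
    unfolding t fourier_triple_def using omega_squared by (simp; algebra)
  then show ?thesis
    by blast
qed

lemma positive_fourier_triple_iff:
  "positive_triple (fourier_triple m u v) \<longleftrightarrow> cmod v < cmod u"
proof -
  have Im_eq: "Im (((m + u + v) - (m + u * omega + v * omega\<^sup>2)) *
            cnj ((m + u * omega\<^sup>2 + v * omega) - (m + u * omega + v * omega\<^sup>2)))
        = 3 * sqrt 3 / 2 * ((cmod u)\<^sup>2 - (cmod v)\<^sup>2)"
    unfolding omega_def
    by (cases u; cases v; simp only: cmod_power2; simp add: power2_eq_square algebra_simps sqrt3_mult_self)
  have "positive_triple (fourier_triple m u v) \<longleftrightarrow> (cmod v)\<^sup>2 < (cmod u)\<^sup>2"
    unfolding fourier_triple_def positive_triple_iff Im_eq by (simp add: zero_less_mult_iff)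
  then show ?thesis
    by (metis abs_le_square_iff abs_norm_cancel not_le)
qed

lemma alpha_beta_gamma_sum:
  assumes "p * q \<noteq> 1"
  shows "alpha p q + beta p q + gamma p q = 1"
proof -
  have "alpha p q + beta p q + gamma p q = (p*(1-q) + q*(1-p) + (1-p)*(1-q)) / (1 - p*q)"
    unfolding alpha_def beta_def gamma_def by (simp add: add_divide_distrib)
  also have "p*(1-q) + q*(1-p) + (1-p)*(1-q) = 1 - p*q"
    by (simp add: algebra_simps)
  finally show ?thesis
    using assms by simp
qed

definition S_eigenvalue1 :: "complex \<Rightarrow> complex \<Rightarrow> complex" where
  "S_eigenvalue1 p q = alpha p q + beta p q * omega + gamma p q * omega\<^sup>2"

definition S_eigenvalue2 :: "complex \<Rightarrow> complex \<Rightarrow> complex" where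
  "S_eigenvalue2 p q = alpha p q + beta p q * omega\<^sup>2 + gamma p q * omega"

lemma S_map_fourier_triple:
  assumes "p * q \<noteq> 1"
  shows "S_map p q (fourier_triple m u v) =
         fourier_triple m (S_eigenvalue1 p q * u) (S_eigenvalue2 p q * v)"
  unfolding S_map_def fourier_triple_def S_eigenvalue1_def S_eigenvalue2_def
  using alpha_beta_gamma_sum[OF assms] omega_squared by (simp; algebra)

lemma S_map_eigenvalues:
  assumes "p * q \<noteq> 1"
  shows "(1 - p * q) * S_eigenvalue1 p q = (2*p - 1) * (1 - q) + omega * ((2*q - 1) * (1 - p))"
    and "(1 - p * q) * S_eigenvalue2 p q = (2*p - 1) * (1 - q) + cnj omega * ((2*q - 1) * (1 - p))"
proof -
  have "1 - p * q \<noteq> 0"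
    using assms by simp
  then have expand: "(1 - p * q) * (alpha p q + beta p q * x + gamma p q * y)
                       = p * (1 - q) + q * (1 - p) * x + (1 - p) * (1 - q) * y" for x y
    unfolding alpha_def beta_def gamma_def by (simp add: distrib_left)
  show "(1 - p * q) * S_eigenvalue1 p q = (2*p - 1) * (1 - q) + omega * ((2*q - 1) * (1 - p))"
    unfolding S_eigenvalue1_def expand omega_squared by algebra
  show "(1 - p * q) * S_eigenvalue2 p q = (2*p - 1) * (1 - q) + cnj omega * ((2*q - 1) * (1 - p))"
    unfolding S_eigenvalue2_def expand omega_squared cnj_omega by algebra
qed

lemma scaling_preserves_norm_less_iff:
  fixes l1 l2 :: complex
  shows "(\<forall>u v. cmod v < cmod u \<longrightarrow> cmod (l2 * v) < cmod (l1 * u)) \<longleftrightarrow>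
         l1 \<noteq> 0 \<and> cmod l2 \<le> cmod l1"
proof
  assume scale: "\<forall>u v. cmod v < cmod u \<longrightarrow> cmod (l2 * v) < cmod (l1 * u)"
  have "l1 \<noteq> 0"
    using scale[rule_format, of 0 1] by auto
  moreover have "cmod l2 \<le> cmod l1"
  proof (rule ccontr)
    assume "\<not> cmod l2 \<le> cmod l1"
    moreover have l2: "0 < cmod l2"
      using calculation norm_ge_zero[of l1] by linarith
    ultimately have "cmod l1 / cmod l2 < 1"
      by (simp add: divide_less_eq)
    then obtain r where r: "cmod l1 / cmod l2 < r" "r < 1"
      using dense by blast
    then have "cmod l1 < cmod l2 * r"
      using l2 by (simp add: divide_less_eq mult.commute)
    moreover have "0 \<le> r"
      using r(1) by (smt (verit) divide_nonneg_nonneg norm_ge_zero)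
    then have "cmod l2 * r < cmod l1"
      using scale[rule_format, of "complex_of_real r" 1] r(2) by (simp add: norm_mult)
    ultimately show False
      by simp
  qed
  ultimately show "l1 \<noteq> 0 \<and> cmod l2 \<le> cmod l1" ..
next
  assume l: "l1 \<noteq> 0 \<and> cmod l2 \<le> cmod l1"
  show "\<forall>u v. cmod v < cmod u \<longrightarrow> cmod (l2 * v) < cmod (l1 * u)"
  proof (intro allI impI)
    fix u v :: complex
    assume "cmod v < cmod u"
    then have "cmod l2 * cmod v \<le> cmod l1 * cmod v" and "cmod l1 * cmod v < cmod l1 * cmod u"
      using l by (simp_all add: mult_right_mono)
    then show "cmod (l2 * v) < cmod (l1 * u)"
      by (simp add: norm_mult)
  qed
qed

lemma S_map_preserves_positive_iff:
  assumes "p * q \<noteq> 1"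
  shows "(\<forall>t. positive_triple t \<longrightarrow> positive_triple (S_map p q t)) \<longleftrightarrow>
         S_eigenvalue1 p q \<noteq> 0 \<and> cmod (S_eigenvalue2 p q) \<le> cmod (S_eigenvalue1 p q)"
proof -
  have "(\<forall>t. positive_triple t \<longrightarrow> positive_triple (S_map p q t)) \<longleftrightarrow>
        (\<forall>u v. cmod v < cmod u \<longrightarrow> cmod (S_eigenvalue2 p q * v) < cmod (S_eigenvalue1 p q * u))"
  proof (intro iffI allI impI)
    fix u v
    assume "\<forall>t. positive_triple t \<longrightarrow> positive_triple (S_map p q t)" and "cmod v < cmod u"
    then show "cmod (S_eigenvalue2 p q * v) < cmod (S_eigenvalue1 p q * u)"
      by (metis S_map_fourier_triple[OF assms] positive_fourier_triple_iff)
  next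
    fix t
    assume "\<forall>u v. cmod v < cmod u \<longrightarrow> cmod (S_eigenvalue2 p q * v) < cmod (S_eigenvalue1 p q * u)"
      and "positive_triple t"
    moreover obtain m u v where "t = fourier_triple m u v"
      using fourier_triple_surj by blast
    ultimately show "positive_triple (S_map p q t)"
      by (simp add: S_map_fourier_triple[OF assms] positive_fourier_triple_iff)
  qed
  then show ?thesis
    by (simp only: scaling_preserves_norm_less_iff)
qed

lemma eigenvalue_criterion:
  fixes p q :: complex
  assumes "p * q \<noteq> 1"
  defines "A \<equiv> (2*p - 1) * (1 - q)" and "B \<equiv> (2*q - 1) * (1 - p)"
  shows "A + omega * B \<noteq> 0 \<and> 0 \<le> Im (A * cnj B) \<longleftrightarrow>
         (p = q \<and> p \<noteq> 1/2) \<or>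
         (p \<noteq> q \<and> (p - 1) * (2 * q - 1) / (p - q) \<in> \<real> \<union> upper_half_plane)"
proof (cases "p = q")
  case True
  then have "A = B" and "p \<noteq> 1"
    using assms(1) unfolding A_def B_def by (auto simp: algebra_simps)
  have "A + omega * B = (1 + omega) * A"
    using \<open>A = B\<close> by (simp add: algebra_simps)
  then have "A + omega * B \<noteq> 0 \<longleftrightarrow> 2 * p - 1 \<noteq> 0"
    using omega_neq_minus_one \<open>p \<noteq> 1\<close> True unfolding A_def by simp
  also have "\<dots> \<longleftrightarrow> p \<noteq> 1/2"
    by (auto simp: field_simps)
  finally have "A + omega * B \<noteq> 0 \<longleftrightarrow> p \<noteq> 1/2" .
  moreover have "Im (A * cnj B) = 0"
    using \<open>A = B\<close> by (simp add: algebra_simps)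
  ultimately show ?thesis
    using True by simp
next
  case False
  define z where "z = (p - 1) * (2 * q - 1) / (p - q)"
  have AB: "A = B + (p - q)" and Bz: "B = - z * (p - q)"
    using False unfolding z_def A_def B_def by (simp_all add: field_simps)
  have "Im (A * cnj B) = (cmod (p - q))\<^sup>2 * Im z"
    unfolding AB Bz by (cases z; cases "p - q"; simp only: cmod_power2; simp add: power2_eq_square algebra_simps)
  then have "0 \<le> Im (A * cnj B) \<longleftrightarrow> 0 \<le> Im z"
    using False by (simp add: zero_le_mult_iff)
  moreover have "A + omega * B \<noteq> 0" if "0 \<le> Im (A * cnj B)"
    using add_omega_mult_eq_0_imp_zero[OF _ that] AB False by force
  moreover have "z \<in> \<real> \<union> upper_half_plane \<longleftrightarrow> 0 \<le> Im z"
    unfolding upper_half_plane_def by (auto simp: complex_is_Real_iff)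
  ultimately show ?thesis
    using False unfolding z_def by blast
qed

theorem proposition2p1:
  fixes p q :: complex
  assumes "p * q \<noteq> 1"
  shows "(\<forall>t. positive_triple t \<longrightarrow> positive_triple (S_map p q t)) \<longleftrightarrow>
         ((p = q \<and> p \<noteq> 1/2) \<or>
          (p \<noteq> q \<and> (p - 1) * (2 * q - 1) / (p - q) \<in> \<real> \<union> upper_half_plane))"
proof -
  define A where "A = (2*p - 1) * (1 - q)"
  define B where "B = (2*q - 1) * (1 - p)"
  have D: "1 - p * q \<noteq> 0"
    using assms by simp
  note eig = S_map_eigenvalues[OF assms, folded A_def B_def]
  have "(\<forall>t. positive_triple t \<longrightarrow> positive_triple (S_map p q t)) \<longleftrightarrow>
        S_eigenvalue1 p q \<noteq> 0 \<and> cmod (S_eigenvalue2 p q) \<le> cmod (S_eigenvalue1 p q)"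
    by (rule S_map_preserves_positive_iff[OF assms])
  also have "\<dots> \<longleftrightarrow> A + omega * B \<noteq> 0 \<and> cmod (A + cnj omega * B) \<le> cmod (A + omega * B)"
    using D unfolding eig[symmetric] by (simp add: norm_mult)
  also have "\<dots> \<longleftrightarrow> A + omega * B \<noteq> 0 \<and> 0 \<le> Im (A * cnj B)"
    by (simp add: norm_add_cnj_omega_le_iff)
  also have "\<dots> \<longleftrightarrow> (p = q \<and> p \<noteq> 1/2) \<or>
        (p \<noteq> q \<and> (p - 1) * (2 * q - 1) / (p - q) \<in> \<real> \<union> upper_half_plane)"
    unfolding A_def B_def by (rule eigenvalue_criterion[OF assms])
  finally show ?thesis .
qed

end
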